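(* Let $d\ge 3$ be odd. The abelianization $G_d/G_d'$ is isomorphic to $\mathbb Z^d$; more precisely, the elements $a_1^{i_1}a_2^{i_2}\cdots a_d^{i_d}$, $(i_1,\dots,i_d)\in\mathbb Z^d$, form a complete set of pairwise distinct coset representatives of $G_d'$ in $G_d$.
   Context: Let $d\ge 3$, $X=\{1,\dots,d\}$, $T$ the $d$-regular rooted tree with vertex set $X^*$. $\mathrm{Aut}(T)$ is the group of root-preserving automorphisms with product left-to-right: $(gh)(u)=h(g(u))$. Sections $g|_u$ are defined by $g(uv)=g(u)\,g|_u(v)$; we write $g=(g|_1,\dots,g|_d)\lambda_g$ with $\lambda_g\in S_d$ the action on the first level; $e$ is the identity; $\overline{j}\in\{1,\dots,d\}$ denotes $j$ mod $d$. $G_d=\langle a_1,\dots,a_d\rangle\le\mathrm{Aut}(T)$ where $a_i$ acts on the first level as $(i\ \overline{i+1})$, with $a_i|_i=a_i$, $a_i|_{\overline{i+1}}=a_{\overline{i+1}}$, and $a_i|_x=e$ otherwise. $G_d'$ denotes the commutator subgroup. *)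

theory Defs
  imports "HOL-Algebra.Algebra"
begin

text \<open>Alphabet X = {1..d}; vertices of the d-regular rooted tree T are the words in X^*,
  represented as nat lists all of whose letters lie in {1..d}.\<close>

definition alphabet :: "nat \<Rightarrow> nat set" where
  "alphabet d = {1..d}"

definition tree_vertices :: "nat \<Rightarrow> nat list set" where
  "tree_vertices d = lists (alphabet d)"

text \<open>nxt d j = the representative of j+1 mod d in {1..d} (for j in {1..d}).\<close>
definition nxt :: "nat \<Rightarrow> nat \<Rightarrow> nat" where
  "nxt d j = j mod d + 1"

text \<open>Root-preserving automorphisms of T: bijections of X^* that preserve word length and
  the prefix (parent/child) relation, as extensional functions on X^*.\<close>
definition tree_auts :: "nat \<Rightarrow> (nat list \<Rightarrow> nat list) set" where
  "tree_auts d = {f \<in> Bij (tree_vertices d).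
      (\<forall>u \<in> tree_vertices d. length (f u) = length u) \<and>
      (\<forall>u \<in> tree_vertices d. \<forall>v \<in> tree_vertices d. \<exists>w. f (u @ v) = f u @ w)}"

text \<open>Aut(T) with the left-to-right product (g h)(u) = h(g(u)).\<close>
definition AutT :: "nat \<Rightarrow> (nat list \<Rightarrow> nat list) monoid" where
  "AutT d = \<lparr>carrier = tree_auts d,
             monoid.mult = (\<lambda>g h. compose (tree_vertices d) h g),
             one = (\<lambda>u \<in> tree_vertices d. u)\<rparr>"

fun gen_act :: "nat \<Rightarrow> nat \<Rightarrow> nat list \<Rightarrow> nat list" where
  "gen_act d i [] = []"
| "gen_act d i (x # w) =
     (if x = i then nxt d i # gen_act d i w
      else if x = nxt d i then i # gen_act d (nxt d i) w
      else x # w)"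

definition gen :: "nat \<Rightarrow> nat \<Rightarrow> nat list \<Rightarrow> nat list" where
  "gen d i = restrict (gen_act d i) (tree_vertices d)"

definition Gd :: "nat \<Rightarrow> (nat list \<Rightarrow> nat list) monoid" where
  "Gd d = (AutT d)\<lparr>carrier := generate (AutT d) (gen d ` {1..d})\<rparr>"

definition Gd_comm :: "nat \<Rightarrow> (nat list \<Rightarrow> nat list) set" where
  "Gd_comm d = derived (Gd d) (carrier (Gd d))"

definition mono_word :: "nat \<Rightarrow> (nat \<Rightarrow> int) \<Rightarrow> nat list \<Rightarrow> nat list" where
  "mono_word d e = foldr (\<lambda>k acc. (gen d k [^]\<^bsub>Gd d\<^esub> e k) \<otimes>\<^bsub>Gd d\<^esub> acc) [1..<d+1] \<one>\<^bsub>Gd d\<^esub>"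

end

theory Submission
  imports Defs
begin

text \<open>
  Sending a word in the letters \<open>a_i\<^sup>\<plusminus>\<^sup>1\<close> to its vector of exponent sums is well defined on
  \<open>G_d\<close> because every relator has zero exponent sums. The exponent vectors of the first-level
  sections of a word \<open>w\<close> add up to \<open>(I + P) e(w)\<close>, with \<open>P\<close> the cyclic shift, and \<open>I + P\<close> is
  injective for odd \<open>d\<close>; so a relator with nonzero exponent vector has a section of the same
  kind, again a relator and no longer than \<open>w\<close>. For a shortest such relator these sections
  have full length and are cyclically reduced. A factor \<open>a_i\<^sup>-\<^sup>1 a_j\<close>, or a positive first and
  a negative last letter, would produce a cancellation in such a section. If all letters have
  the same sign, the first two letters of a minimal relator must have equal index, while those
  of its full-length sections never do.

  The resulting epimorphism \<open>G_d \<rightarrow> \<int>\<^sup>d\<close> has kernel \<open>G_d'\<close>, since \<open>G_d/G_d'\<close> is abelian and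
  generated by the images of the \<open>a_i\<close>; it maps \<open>a_1^i_1 \<cdots> a_d^i_d\<close> to \<open>(i_1, \<dots>, i_d)\<close>.
\<close>

section \<open>Abelian quotients and products of integer groups\<close>

lemma (in group_hom) derived_subset_kernel:
  assumes "comm_group H"
  shows "derived G (carrier G) \<subseteq> kernel G H h"
proof -
  have "h ` carrier G \<subseteq> carrier H" by auto
  then have "h ` derived G (carrier G) = {\<one>\<^bsub>H\<^esub>}"
    using derived_img[of "carrier G"] comm_group.derived_eq_singleton[OF assms] by simp
  then show ?thesis using G.derived_in_carrier[of "carrier G"] by (auto simp: kernel_def)
qed

lemma (in group_hom) kernel_rcos_eq_iff:
  assumes "x \<in> carrier G" "y \<in> carrier G"
  shows "kernel G H h #> x = kernel G H h #> y \<longleftrightarrow> h x = h y"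
proof
  assume "kernel G H h #> x = kernel G H h #> y"
  then have "x \<in> kernel G H h #> y" using G.rcos_self[OF assms(1) subgroup_kernel] by simp
  then obtain k where "k \<in> kernel G H h" "x = k \<otimes> y" unfolding r_coset_def by blast
  then show "h x = h y" using assms(2) by (simp add: kernel_def)
next
  assume "h x = h y"
  then show "kernel G H h #> x = kernel G H h #> y"
    using FactGroup_subset[OF assms] FactGroup_subset[OF assms(2,1)] by (intro equalityI) simp_all
qed

lemma (in group_hom) kernel_eq_derived_if_factors:
  assumes "comm_group H" and \<psi>: "\<psi> \<in> hom H (G Mod derived G (carrier G))"
    and factors: "\<And>g. g \<in> carrier G \<Longrightarrow> \<psi> (h g) = derived G (carrier G) #> g"
  shows "kernel G H h = derived G (carrier G)"
proof
  show "kernel G H h \<subseteq> derived G (carrier G)"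
  proof
    fix g assume g: "g \<in> kernel G H h"
    then have "g \<in> carrier G" "h g = \<one>\<^bsub>H\<^esub>" by (auto simp: kernel_def)
    moreover have "\<psi> \<one>\<^bsub>H\<^esub> = derived G (carrier G)"
      using group_hom.hom_one[of H "G Mod derived G (carrier G)" \<psi>] \<psi> G.derived_quot_is_group
      by (simp add: group_hom_def group_hom_axioms_def)
    ultimately have "derived G (carrier G) #> g = derived G (carrier G)" using factors by metis
    then show "g \<in> derived G (carrier G)"
      using G.rcos_self[OF \<open>g \<in> carrier G\<close> G.derived_is_subgroup[of "carrier G"]] by simp
  qed
qed (rule derived_subset_kernel[OF assms(1)])

lemma (in comm_group) finprod_int_pow_hom:
  assumes "finite I" "a \<in> I \<rightarrow> carrier G"
  shows "(\<lambda>e. finprod G (\<lambda>i. a i [^] e i) I) \<in> hom (product_group I (\<lambda>_. integer_group)) G"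
proof (rule homI)
  have pow_closed: "(\<lambda>i. a i [^] (e i :: int)) \<in> I \<rightarrow> carrier G" for e
    using assms(2) by auto
  then show "finprod G (\<lambda>i. a i [^] (e i :: int)) I \<in> carrier G" for e
    by (rule finprod_closed)
  fix e e' :: "_ \<Rightarrow> int"
  have "finprod G (\<lambda>i. a i [^] (e \<otimes>\<^bsub>product_group I (\<lambda>_. integer_group)\<^esub> e') i) I =
        finprod G (\<lambda>i. a i [^] e i \<otimes> a i [^] e' i) I"
    using assms(2) by (intro finprod_cong') (auto simp: Pi_iff int_pow_mult)
  also have "\<dots> = finprod G (\<lambda>i. a i [^] e i) I \<otimes> finprod G (\<lambda>i. a i [^] e' i) I"
    using pow_closed[of e] pow_closed[of e'] by (rule finprod_multf)
  finally show "finprod G (\<lambda>i. a i [^] (e \<otimes>\<^bsub>product_group I (\<lambda>_. integer_group)\<^esub> e') i) I =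
      finprod G (\<lambda>i. a i [^] e i) I \<otimes> finprod G (\<lambda>i. a i [^] e' i) I" .
qed

lemma int_pow_product_group:
  assumes groups: "\<And>i. i \<in> I \<Longrightarrow> group (G i)" and x: "x \<in> carrier (product_group I G)"
  shows "x [^]\<^bsub>product_group I G\<^esub> (n :: int) = (\<lambda>i\<in>I. x i [^]\<^bsub>G i\<^esub> n)"
proof -
  have nat_pow: "x [^]\<^bsub>product_group I G\<^esub> (m :: nat) = (\<lambda>i\<in>I. x i [^]\<^bsub>G i\<^esub> m)" for m
  proof (induction m)
    case (Suc m)
    then show ?case by (simp only: nat_pow_Suc mult_product_group) (rule restrict_ext, simp)
  qed simp
  have inv_pow: "inv\<^bsub>product_group I G\<^esub> (x [^]\<^bsub>product_group I G\<^esub> m) =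
      (\<lambda>i\<in>I. inv\<^bsub>G i\<^esub> (x i [^]\<^bsub>G i\<^esub> m))" for m :: nat
  proof -
    have "x i [^]\<^bsub>G i\<^esub> m \<in> carrier (G i)" if "i \<in> I" for i
      using x that groups[OF that] by (simp add: PiE_iff group.is_monoid monoid.nat_pow_closed)
    then show ?thesis unfolding nat_pow using groups
      by (subst inv_product_group) (simp_all cong: restrict_cong)
  qed
  show ?thesis
  proof (cases "n < 0")
    case True
    then show ?thesis by (simp only: int_pow_def2 if_True inv_pow)
  next
    case False
    then show ?thesis by (simp only: int_pow_def2 if_False nat_pow)
  qed
qed

lemma (in monoid) foldr_mult_closed:
  "(\<And>k. k \<in> set ks \<Longrightarrow> f k \<in> carrier G) \<Longrightarrow> foldr (\<lambda>k acc. f k \<otimes> acc) ks \<one> \<in> carrier G"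
  by (induction ks) auto

lemma (in group_hom) hom_foldr_mult:
  "(\<And>k. k \<in> set ks \<Longrightarrow> f k \<in> carrier G) \<Longrightarrow>
   h (foldr (\<lambda>k acc. f k \<otimes> acc) ks \<one>) = foldr (\<lambda>k acc. h (f k) \<otimes>\<^bsub>H\<^esub> acc) ks \<one>\<^bsub>H\<^esub>"
  by (induction ks) (auto simp: G.foldr_mult_closed)

lemma comm_group_product_group:
  assumes "\<And>i. i \<in> I \<Longrightarrow> comm_group (G i)"
  shows "comm_group (product_group I G)"
proof (rule group.group_comm_groupI)
  show "group (product_group I G)" using assms by (simp add: comm_group.axioms(2))
  fix x y assume "x \<in> carrier (product_group I G)" "y \<in> carrier (product_group I G)"
  then show "x \<otimes>\<^bsub>product_group I G\<^esub> y = y \<otimes>\<^bsub>product_group I G\<^esub> x"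
    using assms by (auto simp: PiE_iff comm_groupE(4) intro!: restrict_ext)
qed

lemma foldr_unit_vectors:
  assumes "distinct ks"
  shows "foldr (\<lambda>k acc. (\<lambda>i\<in>I. if i = k then e k else 0) \<otimes>\<^bsub>product_group I (\<lambda>_. integer_group)\<^esub> acc)
      ks \<one>\<^bsub>product_group I (\<lambda>_. integer_group)\<^esub> = (\<lambda>i\<in>I. if i \<in> set ks then e i else (0 :: int))"
  using assms by (induction ks) (auto intro!: restrict_ext)

section \<open>Words in the generators and their action on the tree\<close>

text \<open>The letter \<open>(j, True)\<close> stands for \<open>a_j\<close> and \<open>(j, False)\<close> for \<open>a_j\<^sup>-\<^sup>1\<close>; words act letter by
  letter from the left, matching the left-to-right product of \<open>Aut(T)\<close>.\<close>

type_synonym letter = "nat \<times> bool"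

fun gen_inv_act :: "nat \<Rightarrow> nat \<Rightarrow> nat list \<Rightarrow> nat list" where
  "gen_inv_act d i [] = []"
| "gen_inv_act d i (x # w) =
     (if x = nxt d i then i # gen_inv_act d i w
      else if x = i then nxt d i # gen_inv_act d (nxt d i) w
      else x # w)"

fun letter_act :: "nat \<Rightarrow> letter \<Rightarrow> nat list \<Rightarrow> nat list" where
  "letter_act d (j, True) = gen_act d j"
| "letter_act d (j, False) = gen_inv_act d j"

definition word_act :: "nat \<Rightarrow> letter list \<Rightarrow> nat list \<Rightarrow> nat list" where
  "word_act d w u = fold (letter_act d) w u"

fun flip_letter :: "letter \<Rightarrow> letter" where
  "flip_letter (j, b) = (j, \<not> b)"

definition word_inv :: "letter list \<Rightarrow> letter list" where
  "word_inv w = rev (map flip_letter w)"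

definition valid_word :: "nat \<Rightarrow> letter list \<Rightarrow> bool" where
  "valid_word d w \<longleftrightarrow> (\<forall>l \<in> set w. fst l \<in> {1..d})"

definition exp_sum :: "letter list \<Rightarrow> nat \<Rightarrow> int" where
  "exp_sum w k = (\<Sum>(j, b) \<leftarrow> w. if j = k then (if b then 1 else -1) else 0)"

definition acts_trivially :: "nat \<Rightarrow> letter list \<Rightarrow> bool" where
  "acts_trivially d w \<longleftrightarrow> (\<forall>u \<in> lists {1..d}. word_act d w u = u)"

lemma word_act_Nil [simp]: "word_act d [] u = u"
  by (simp add: word_act_def)

lemma word_act_Cons [simp]: "word_act d (l # w) u = word_act d w (letter_act d l u)"
  by (simp add: word_act_def)

lemma word_act_append [simp]: "word_act d (a @ b) u = word_act d b (word_act d a u)"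
  by (simp add: word_act_def)

lemma exp_sum_Nil [simp]: "exp_sum [] k = 0"
  by (simp add: exp_sum_def)

lemma exp_sum_Cons [simp]:
  "exp_sum (l # w) k = (if fst l = k then (if snd l then 1 else -1) else 0) + exp_sum w k"
  by (cases l) (simp add: exp_sum_def)

lemma exp_sum_append [simp]: "exp_sum (a @ b) k = exp_sum a k + exp_sum b k"
  by (simp add: exp_sum_def)

lemma flip_letter_flip_letter [simp]: "flip_letter (flip_letter l) = l"
  by (cases l) auto

lemma fst_flip_letter [simp]: "fst (flip_letter l) = fst l"
  by (cases l) auto

lemma snd_flip_letter [simp]: "snd (flip_letter l) = (\<not> snd l)"
  by (cases l) auto

lemma valid_word_Nil [simp]: "valid_word d []"
  by (simp add: valid_word_def)

lemma valid_word_Cons [simp]: "valid_word d (l # w) \<longleftrightarrow> fst l \<in> {1..d} \<and> valid_word d w"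
  by (auto simp: valid_word_def)

lemma valid_word_append [simp]: "valid_word d (a @ b) \<longleftrightarrow> valid_word d a \<and> valid_word d b"
  by (auto simp: valid_word_def)

lemma word_inv_Nil [simp]: "word_inv [] = []"
  by (simp add: word_inv_def)

lemma word_inv_Cons [simp]: "word_inv (l # w) = word_inv w @ [flip_letter l]"
  by (simp add: word_inv_def)

lemma word_inv_append [simp]: "word_inv (a @ b) = word_inv b @ word_inv a"
  by (simp add: word_inv_def)

lemma word_inv_word_inv [simp]: "word_inv (word_inv w) = w"
  by (simp add: word_inv_def rev_map comp_def)

lemma length_word_inv [simp]: "length (word_inv w) = length w"
  by (simp add: word_inv_def)

lemma set_word_inv: "set (word_inv w) = flip_letter ` set w"
  by (simp add: word_inv_def)

lemma valid_word_inv [simp]: "valid_word d (word_inv w) \<longleftrightarrow> valid_word d w"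
  by (induction w) auto

lemma exp_sum_word_inv [simp]: "exp_sum (word_inv w) k = - exp_sum w k"
  by (induction w) auto

lemma nxt_in_alphabet: "0 < d \<Longrightarrow> nxt d j \<in> {1..d}"
  by (simp add: nxt_def) (meson Suc_leI mod_less_divisor)

lemma nxt_eq: "j \<in> {1..d} \<Longrightarrow> nxt d j = (if j = d then 1 else j + 1)"
  by (auto simp: nxt_def)

lemma nxt_neq: "3 \<le> d \<Longrightarrow> j \<in> {1..d} \<Longrightarrow> nxt d j \<noteq> j"
  by (auto simp: nxt_eq)

lemma nxt_nxt_neq: "3 \<le> d \<Longrightarrow> j \<in> {1..d} \<Longrightarrow> nxt d (nxt d j) \<noteq> j"
  using nxt_in_alphabet[of d j] by (auto simp: nxt_eq split: if_splits)

lemma nxt_inj: "j \<in> {1..d} \<Longrightarrow> k \<in> {1..d} \<Longrightarrow> nxt d j = nxt d k \<longleftrightarrow> j = k"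
  by (auto simp: nxt_eq split: if_splits)

lemma gen_inv_act_gen_act:
  "3 \<le> d \<Longrightarrow> j \<in> {1..d} \<Longrightarrow> u \<in> lists {1..d} \<Longrightarrow> gen_inv_act d j (gen_act d j u) = u"
  by (induction u arbitrary: j) (use nxt_neq nxt_in_alphabet in auto)

lemma gen_act_gen_inv_act:
  "3 \<le> d \<Longrightarrow> j \<in> {1..d} \<Longrightarrow> u \<in> lists {1..d} \<Longrightarrow> gen_act d j (gen_inv_act d j u) = u"
  by (induction u arbitrary: j) (use nxt_neq nxt_in_alphabet in auto)

lemma gen_act_in_lists:
  "3 \<le> d \<Longrightarrow> j \<in> {1..d} \<Longrightarrow> u \<in> lists {1..d} \<Longrightarrow> gen_act d j u \<in> lists {1..d}"
  by (induction u arbitrary: j) (use nxt_in_alphabet in auto)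

lemma gen_inv_act_in_lists:
  "3 \<le> d \<Longrightarrow> j \<in> {1..d} \<Longrightarrow> u \<in> lists {1..d} \<Longrightarrow> gen_inv_act d j u \<in> lists {1..d}"
  by (induction u arbitrary: j) (use nxt_in_alphabet in auto)

lemma letter_act_flip_letter:
  "3 \<le> d \<Longrightarrow> fst l \<in> {1..d} \<Longrightarrow> u \<in> lists {1..d} \<Longrightarrow>
   letter_act d (flip_letter l) (letter_act d l u) = u"
  by (cases l; cases "snd l") (auto simp: gen_inv_act_gen_act gen_act_gen_inv_act)

lemma letter_act_in_lists:
  "3 \<le> d \<Longrightarrow> fst l \<in> {1..d} \<Longrightarrow> u \<in> lists {1..d} \<Longrightarrow> letter_act d l u \<in> lists {1..d}"
  using gen_act_in_lists[of d "fst l" u] gen_inv_act_in_lists[of d "fst l" u]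
  by (cases l; cases "snd l") auto

lemma length_letter_act [simp]: "length (letter_act d l u) = length u"
proof -
  have "length (gen_act d j u) = length u" "length (gen_inv_act d j u) = length u" for j
    by (induction u arbitrary: j) auto
  then show ?thesis by (cases l; cases "snd l") auto
qed

lemma letter_act_append: "\<exists>w. letter_act d l (u @ v) = letter_act d l u @ w"
proof -
  have "\<exists>w. gen_act d j (u @ v) = gen_act d j u @ w" "\<exists>w. gen_inv_act d j (u @ v) = gen_inv_act d j u @ w"
    for j by (induction u arbitrary: j) auto
  then show ?thesis by (cases l; cases "snd l") auto
qed

lemma word_act_in_lists:
  "3 \<le> d \<Longrightarrow> valid_word d w \<Longrightarrow> u \<in> lists {1..d} \<Longrightarrow> word_act d w u \<in> lists {1..d}"
proof (induction w arbitrary: u)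
  case (Cons l w)
  then show ?case using letter_act_in_lists[of d l u] by simp
qed simp

lemma length_word_act [simp]: "length (word_act d w u) = length u"
  by (induction w arbitrary: u) auto

lemma word_act_append_vertex: "\<exists>x. word_act d w (u @ v) = word_act d w u @ x"
proof (induction w arbitrary: u v)
  case (Cons l w)
  obtain y where "letter_act d l (u @ v) = letter_act d l u @ y"
    using letter_act_append by blast
  then show ?case using Cons by auto
qed simp

lemma word_act_word_inv:
  "3 \<le> d \<Longrightarrow> valid_word d w \<Longrightarrow> u \<in> lists {1..d} \<Longrightarrow> word_act d (word_inv w) (word_act d w u) = u"
proof (induction w arbitrary: u)
  case (Cons l w)
  then show ?case using letter_act_in_lists[of d l u] letter_act_flip_letter[of d l u] by simp
qed simp

lemma word_act_word_inv':
  "3 \<le> d \<Longrightarrow> valid_word d w \<Longrightarrow> u \<in> lists {1..d} \<Longrightarrow> word_act d w (word_act d (word_inv w) u) = u"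
  using word_act_word_inv[of d "word_inv w" u] by simp

lemma acts_trivially_word_inv:
  "3 \<le> d \<Longrightarrow> valid_word d w \<Longrightarrow> acts_trivially d w \<Longrightarrow> acts_trivially d (word_inv w)"
  unfolding acts_trivially_def by (metis word_act_word_inv)

section \<open>Sections of words\<close>

fun letter_perm :: "nat \<Rightarrow> letter \<Rightarrow> nat \<Rightarrow> nat" where
  "letter_perm d (j, True) p = (if p = j then nxt d j else if p = nxt d j then j else p)"
| "letter_perm d (j, False) p = (if p = nxt d j then j else if p = j then nxt d j else p)"

text \<open>Sections of an inverse: \<open>(g\<^sup>-\<^sup>1)|\<^sub>p = (g|\<^bsub>g\<^sup>-\<^sup>1(p)\<^esub>)\<^sup>-\<^sup>1\<close>.\<close>

fun letter_section :: "nat \<Rightarrow> letter \<Rightarrow> nat \<Rightarrow> letter list" where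
  "letter_section d (j, True) p =
     (if p = j then [(j, True)] else if p = nxt d j then [(nxt d j, True)] else [])"
| "letter_section d (j, False) p =
     (if p = nxt d j then [(j, False)] else if p = j then [(nxt d j, False)] else [])"

fun word_perm :: "nat \<Rightarrow> letter list \<Rightarrow> nat \<Rightarrow> nat" where
  "word_perm d [] p = p"
| "word_perm d (l # w) p = word_perm d w (letter_perm d l p)"

fun word_section :: "nat \<Rightarrow> letter list \<Rightarrow> nat \<Rightarrow> letter list" where
  "word_section d [] p = []"
| "word_section d (l # w) p = letter_section d l p @ word_section d w (letter_perm d l p)"

lemma word_perm_append [simp]: "word_perm d (a @ b) p = word_perm d b (word_perm d a p)"
  by (induction a arbitrary: p) auto

lemma word_section_append [simp]:
  "word_section d (a @ b) p = word_section d a p @ word_section d b (word_perm d a p)"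
  by (induction a arbitrary: p) auto

lemma letter_act_Cons:
  "letter_act d l (x # u) = letter_perm d l x # word_act d (letter_section d l x) u"
  by (cases l; cases "snd l") auto

lemma word_act_Cons_vertex:
  "word_act d w (x # u) = word_perm d w x # word_act d (word_section d w x) u"
  by (induction w arbitrary: x u) (auto simp: letter_act_Cons)

lemma letter_perm_in_alphabet:
  assumes "3 \<le> d" "fst l \<in> {1..d}" "p \<in> {1..d}"
  shows "letter_perm d l p \<in> {1..d}"
proof -
  obtain j b where l: "l = (j, b)" by (cases l)
  have "nxt d j \<in> {1..d}" using assms l nxt_in_alphabet by simp
  then show ?thesis using assms l by (cases b) simp_all
qed

lemma letter_perm_letter_perm:
  assumes "3 \<le> d" "fst l \<in> {1..d}"
  shows "letter_perm d l (letter_perm d l p) = p"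
proof -
  obtain j b where l: "l = (j, b)" by (cases l)
  have "nxt d j \<noteq> j" using assms l nxt_neq by simp
  then show ?thesis using l by (cases b) simp_all
qed

lemma letter_perm_moves:
  assumes "3 \<le> d" "fst l \<in> {1..d}" "letter_section d l p \<noteq> []"
  shows "letter_perm d l p \<noteq> p"
proof -
  obtain j b where l: "l = (j, b)" by (cases l)
  have "nxt d j \<noteq> j" using assms l nxt_neq by simp
  then show ?thesis using assms l by (cases b) (auto split: if_splits)
qed

lemma valid_letter_section:
  assumes "3 \<le> d" "fst l \<in> {1..d}"
  shows "valid_word d (letter_section d l p)"
proof -
  obtain j b where l: "l = (j, b)" by (cases l)
  have "nxt d j \<in> {1..d}" using assms l nxt_in_alphabet by simp
  then show ?thesis using assms l by (cases b) simp_all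
qed

lemma length_letter_section: "length (letter_section d l p) \<le> 1"
  by (cases l; cases "snd l") auto

lemma letter_section_positive:
  "letter_section d l p \<noteq> [] \<Longrightarrow> snd l \<Longrightarrow> letter_section d l p = [(p, True)]"
  by (cases l; cases "snd l") (auto split: if_splits)

lemma letter_section_negative:
  "letter_section d l p \<noteq> [] \<Longrightarrow> \<not> snd l \<Longrightarrow> letter_section d l p = [(letter_perm d l p, False)]"
  by (cases l; cases "snd l") (auto split: if_splits)

lemma letter_section_positive_nonempty:
  "letter_section d (j, True) p \<noteq> [] \<Longrightarrow> p = j \<or> p = nxt d j"
  by (auto split: if_splits)

lemma valid_word_section: "3 \<le> d \<Longrightarrow> valid_word d w \<Longrightarrow> valid_word d (word_section d w p)"
proof (induction w arbitrary: p)
  case (Cons l w)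
  then show ?case using valid_letter_section[of d l p] by simp
qed simp

lemma length_word_section: "length (word_section d w p) \<le> length w"
proof (induction w arbitrary: p)
  case (Cons l w)
  then show ?case using length_letter_section[of d l p] add_mono by fastforce
qed simp

lemma word_section_positive:
  "\<forall>l \<in> set w. snd l \<Longrightarrow> \<forall>l \<in> set (word_section d w p). snd l"
proof (induction w arbitrary: p)
  case (Cons l w)
  then show ?case using letter_section_positive[of d l p] by (cases "letter_section d l p = []") auto
qed simp

lemma acts_trivially_word_perm:
  assumes "acts_trivially d w" "x \<in> {1..d}"
  shows "word_perm d w x = x"
  using assms word_act_Cons_vertex[of d w x "[]"] unfolding acts_trivially_def by force

lemma acts_trivially_word_section:
  assumes "acts_trivially d w" "x \<in> {1..d}"
  shows "acts_trivially d (word_section d w x)"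
  unfolding acts_trivially_def
proof
  fix u assume "u \<in> lists {1..d}"
  then have "word_act d w (x # u) = x # u" using assms unfolding acts_trivially_def by auto
  then show "word_act d (word_section d w x) u = u" by (simp add: word_act_Cons_vertex)
qed

section \<open>Relators have zero exponent sums\<close>

definition balanced :: "nat \<Rightarrow> letter list \<Rightarrow> bool" where
  "balanced d w \<longleftrightarrow> (\<forall>k \<in> {1..d}. exp_sum w k = 0)"

lemma sum_exp_sum_letter_section:
  assumes "3 \<le> d" "j \<in> {1..d}" "k \<in> {1..d}"
  shows "(\<Sum>x\<in>{1..d}. exp_sum (letter_section d (j, b) x) (nxt d k)) =
     exp_sum [(j, b)] k + exp_sum [(j, b)] (nxt d k)"
proof -
  have ne: "nxt d j \<noteq> j" using assms nxt_neq by blast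
  have "(\<Sum>x\<in>{1..d}. exp_sum (letter_section d (j, b) x) (nxt d k)) =
        (\<Sum>x\<in>{j, nxt d j}. exp_sum (letter_section d (j, b) x) (nxt d k))"
    by (cases b; rule sum.mono_neutral_right) (use assms nxt_in_alphabet[of d j] in auto)
  also have "\<dots> = exp_sum [(j, b)] k + exp_sum [(j, b)] (nxt d k)"
    using ne nxt_inj[OF assms(2,3)] by (cases b) auto
  finally show ?thesis .
qed

lemma sum_exp_sum_word_section:
  assumes "3 \<le> d" "valid_word d w" "k \<in> {1..d}"
  shows "(\<Sum>x\<in>{1..d}. exp_sum (word_section d w x) (nxt d k)) = exp_sum w k + exp_sum w (nxt d k)"
  using assms(2)
proof (induction w)
  case (Cons l w)
  obtain j b where l: "l = (j, b)" by (cases l)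
  have j: "j \<in> {1..d}" using Cons.prems l by simp
  have "(\<Sum>x\<in>{1..d}. exp_sum (word_section d w (letter_perm d l x)) (nxt d k)) =
        (\<Sum>x\<in>{1..d}. exp_sum (word_section d w x) (nxt d k))"
    by (rule sum.reindex_bij_witness[where i = "letter_perm d l" and j = "letter_perm d l"])
       (use assms(1) j l letter_perm_letter_perm letter_perm_in_alphabet in auto)
  then show ?case
    using Cons sum_exp_sum_letter_section[OF assms(1) j assms(3), of b] l
    by (simp add: sum.distrib)
qed simp

text \<open>The only place where \<open>d\<close> odd is needed: \<open>c \<mapsto> c + c \<circ> nxt\<close> is injective on \<open>\<int>\<^sup>d\<close>
  exactly for odd \<open>d\<close>.\<close>

lemma odd_cycle_alternating_sum_vanishes:
  fixes c :: "nat \<Rightarrow> int"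
  assumes "odd d" and cyc: "\<And>k. k \<in> {1..d} \<Longrightarrow> c k + c (nxt d k) = 0" and "k \<in> {1..d}"
  shows "c k = 0"
proof -
  have alt: "c k = (-1) ^ (k - 1) * c 1" if "1 \<le> k" "k \<le> d" for k
    using that
  proof (induction k)
    case (Suc m)
    show ?case
    proof (cases "m = 0")
      case False
      then have "c m + c (Suc m) = 0" using cyc[of m] Suc.prems by (simp add: nxt_eq)
      then show ?thesis using Suc False by (cases m) auto
    qed simp
  qed simp
  have "1 \<le> d" using assms(1) by (cases d) auto
  then have "c d = c 1" using alt[of d] assms(1) by simp
  moreover have "c d + c 1 = 0" using cyc[of d] \<open>1 \<le> d\<close> by (simp add: nxt_eq)
  ultimately show ?thesis using alt[of k] assms(3) by simp
qed

lemma unbalanced_word_section: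
  assumes "3 \<le> d" "odd d" "valid_word d w" "\<not> balanced d w"
  shows "\<exists>x\<in>{1..d}. \<not> balanced d (word_section d w x)"
proof (rule ccontr)
  assume "\<not> ?thesis"
  then have "exp_sum w k + exp_sum w (nxt d k) = 0" if "k \<in> {1..d}" for k
    using sum_exp_sum_word_section[OF assms(1,3) that] nxt_in_alphabet[of d k] assms(1)
    by (simp add: balanced_def)
  then show False
    using odd_cycle_alternating_sum_vanishes[OF assms(2)] assms(4) by (auto simp: balanced_def)
qed

definition unbalanced_relator :: "nat \<Rightarrow> letter list \<Rightarrow> bool" where
  "unbalanced_relator d w \<longleftrightarrow> valid_word d w \<and> acts_trivially d w \<and> \<not> balanced d w"

definition minimal_unbalanced_relator :: "nat \<Rightarrow> letter list \<Rightarrow> bool" where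
  "minimal_unbalanced_relator d w \<longleftrightarrow>
     unbalanced_relator d w \<and> (\<forall>v. length v < length w \<longrightarrow> \<not> unbalanced_relator d v)"

lemma minimal_unbalanced_relator_exists:
  assumes "unbalanced_relator d w"
  shows "\<exists>v. minimal_unbalanced_relator d v"
  using assms
proof (induction "length w" arbitrary: w rule: less_induct)
  case less
  then show ?case unfolding minimal_unbalanced_relator_def by blast
qed

lemma full_word_section_Cons:
  assumes "length (word_section d (l # w) p) = length (l # w)"
  shows "letter_section d l p \<noteq> []" "length (word_section d w (letter_perm d l p)) = length w"
  using assms length_letter_section[of d l p] length_word_section[of d w "letter_perm d l p"]
  by (cases "letter_section d l p"; simp)+

lemma full_word_section_append:
  assumes "length (word_section d (a @ b) p) = length (a @ b)"
  shows "length (word_section d a p) = length a"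
    "length (word_section d b (word_perm d a p)) = length b"
  using assms length_word_section[of d a p] length_word_section[of d b "word_perm d a p"]
  by simp_all

lemma minimal_unbalanced_relator_word_section:
  assumes "3 \<le> d" "minimal_unbalanced_relator d w" "x \<in> {1..d}"
    and "\<not> balanced d (word_section d w x)"
  shows "minimal_unbalanced_relator d (word_section d w x)"
    and "length (word_section d w x) = length w"
proof -
  have "unbalanced_relator d (word_section d w x)"
    using assms valid_word_section acts_trivially_word_section
    unfolding minimal_unbalanced_relator_def unbalanced_relator_def by blast
  moreover from this have "length (word_section d w x) = length w"
    using assms(2) length_word_section[of d w x] unfolding minimal_unbalanced_relator_def
    by (meson le_neq_implies_less)
  ultimately show "minimal_unbalanced_relator d (word_section d w x)"
    "length (word_section d w x) = length w"
    using assms(2) unfolding minimal_unbalanced_relator_def by auto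
qed

lemma word_act_cancel:
  assumes "3 \<le> d" "valid_word d (a @ [l] @ b)" "u \<in> lists {1..d}"
  shows "word_act d (a @ [l, flip_letter l] @ b) u = word_act d (a @ b) u"
  using assms word_act_in_lists[of d a u] letter_act_flip_letter[of d l "word_act d a u"] by simp

lemma acts_trivially_conjugate:
  assumes "3 \<le> d" "fst l \<in> {1..d}" "valid_word d m"
    and "acts_trivially d ([l] @ m @ [flip_letter l])"
  shows "acts_trivially d m"
  unfolding acts_trivially_def
proof
  fix y assume y: "y \<in> lists {1..d}"
  define z where "z = letter_act d (flip_letter l) y"
  have z: "z \<in> lists {1..d}"
    unfolding z_def using letter_act_in_lists[of d "flip_letter l" y] assms y by simp
  have lz: "letter_act d l z = y"
    unfolding z_def using letter_act_flip_letter[of d "flip_letter l" y] assms y by simp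
  have my: "word_act d m y \<in> lists {1..d}" using word_act_in_lists assms y by blast
  have "letter_act d (flip_letter l) (word_act d m y) = letter_act d (flip_letter l) y"
    using assms(4) z lz unfolding acts_trivially_def z_def[symmetric] by force
  then show "word_act d m y = y"
    using letter_act_flip_letter[of d "flip_letter l"] assms(1,2) my y
    by (metis fst_flip_letter flip_letter_flip_letter)
qed

lemma minimal_unbalanced_relator_no_cancellation:
  assumes "3 \<le> d" "minimal_unbalanced_relator d w"
  shows "w \<noteq> a @ [l, flip_letter l] @ b"
proof
  assume w: "w = a @ [l, flip_letter l] @ b"
  have "exp_sum w k = exp_sum (a @ b) k" for k using w by (cases l) auto
  then have "unbalanced_relator d (a @ b)"
    using assms word_act_cancel[of d a l b] w
    unfolding minimal_unbalanced_relator_def unbalanced_relator_def acts_trivially_def balanced_def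
    by auto
  then show False using assms(2) w unfolding minimal_unbalanced_relator_def by simp
qed

lemma minimal_unbalanced_relator_no_conjugate:
  assumes "3 \<le> d" "minimal_unbalanced_relator d w"
  shows "w \<noteq> [l] @ m @ [flip_letter l]"
proof
  assume w: "w = [l] @ m @ [flip_letter l]"
  have "exp_sum w k = exp_sum m k" for k using w by (cases l) auto
  then have "unbalanced_relator d m"
    using assms acts_trivially_conjugate[of d l m] w
    unfolding minimal_unbalanced_relator_def unbalanced_relator_def balanced_def by auto
  then show False using assms(2) w unfolding minimal_unbalanced_relator_def by simp
qed

lemma list_sign_change:
  assumes "\<exists>x \<in> set w. P x" "\<exists>x \<in> set w. \<not> P x"
  shows "(\<exists>a x y b. w = a @ [x, y] @ b \<and> \<not> P x \<and> P y) \<or> (P (hd w) \<and> \<not> P (last w))"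
  using assms
proof (induction w)
  case (Cons x w)
  show ?case
  proof (cases "P x")
    case True
    show ?thesis
    proof (cases "P (last (x # w))")
      case last: True
      have "\<exists>y \<in> set w. \<not> P y" using Cons.prems True by auto
      moreover from this have "w \<noteq> []" by auto
      moreover from this have "P (last w)" using last by simp
      ultimately have "\<exists>a y z b. w = a @ [y, z] @ b \<and> \<not> P y \<and> P z"
        using Cons.IH last_in_set by blast
      then show ?thesis by (metis append_Cons)
    qed (use True in simp)
  next
    case False
    then obtain y w' where w: "w = y # w'" using Cons.prems by (cases w) auto
    show ?thesis
    proof (cases "P y")
      case True
      then show ?thesis using False w by (metis append_Nil append_Cons)
    next
      case y: False
      then have "\<exists>a z z' b. w = a @ [z, z'] @ b \<and> \<not> P z \<and> P z'"
        using Cons.IH Cons.prems False w by (metis list.sel(1) list.set_intros(1) set_ConsD)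
      then show ?thesis by (metis append_Cons)
    qed
  qed
qed simp

lemma full_word_section_cancellation:
  assumes "length (word_section d w x) = length w"
    and "w = a @ [l1, l2] @ b" "\<not> snd l1" "snd l2"
  shows "\<exists>a' l b'. word_section d w x = a' @ [l, flip_letter l] @ b'"
proof -
  define p where "p = word_perm d a x"
  have full: "length (word_section d (l1 # l2 # b) p) = length (l1 # l2 # b)"
    using full_word_section_append(2)[of d a "[l1, l2] @ b" x] assms(1,2) p_def by simp
  have "letter_section d l1 p = [(letter_perm d l1 p, False)]"
    using letter_section_negative full_word_section_Cons(1)[OF full] assms(3) by blast
  moreover have "letter_section d l2 (letter_perm d l1 p) = [(letter_perm d l1 p, True)]"
    using letter_section_positive full_word_section_Cons[OF full] full_word_section_Cons(1) assms(4)
    by blast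
  ultimately have "word_section d w x = word_section d a x @
      [(letter_perm d l1 p, False), flip_letter (letter_perm d l1 p, False)] @
      word_section d b (letter_perm d l2 (letter_perm d l1 p))"
    using assms(2) p_def by simp
  then show ?thesis by blast
qed

lemma full_word_section_conjugate:
  assumes "length (word_section d w x) = length w" "word_perm d w x = x"
    and "w = [l1] @ m @ [l2]" "snd l1" "\<not> snd l2"
  shows "\<exists>m'. word_section d w x = [(x, True)] @ m' @ [flip_letter (x, True)]"
proof -
  define r where "r = word_perm d m (letter_perm d l1 x)"
  have first: "letter_section d l1 x = [(x, True)]"
    using letter_section_positive full_word_section_Cons(1)[of d l1 "m @ [l2]" x] assms by simp
  have "length (word_section d [l2] (word_perm d ([l1] @ m) x)) = length [l2]"
    using full_word_section_append(2)[of d "[l1] @ m" "[l2]" x] assms(1,3) by simp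
  then have "letter_section d l2 r \<noteq> []" using full_word_section_Cons(1)[of d l2 "[]"] r_def by simp
  then have "letter_section d l2 r = [(x, False)]"
    using letter_section_negative assms(2,3,5) r_def by fastforce
  then show ?thesis using first assms(3) r_def by auto
qed

lemma positive_word_unbalanced:
  assumes "valid_word d w" "w \<noteq> []" "\<forall>l \<in> set w. snd l"
  shows "\<not> balanced d w"
proof -
  obtain l w' where w: "w = l # w'" using assms by (cases w) auto
  have "exp_sum v k \<ge> 0" if "\<forall>l \<in> set v. snd l" for v k
    using that by (induction v) auto
  from this[of w' "fst l"] have "exp_sum w (fst l) > 0" using assms(3) w by simp
  moreover have "fst l \<in> {1..d}" using assms(1) w by simp
  ultimately show ?thesis unfolding balanced_def by force
qed

lemma single_letter_not_trivial:
  assumes "3 \<le> d" "fst l \<in> {1..d}"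
  shows "\<not> acts_trivially d [l]"
proof
  assume "acts_trivially d [l]"
  then have "letter_perm d l (fst l) = fst l"
    using acts_trivially_word_perm[of d "[l]" "fst l"] assms(2) by simp
  then show False using nxt_neq[OF assms] by (cases l; cases "snd l") auto
qed

lemma minimal_positive_relator_first_letters:
  assumes "3 \<le> d" "minimal_unbalanced_relator d w" "\<forall>l \<in> set w. snd l" "w = l1 # l2 # r"
  shows "fst l1 = fst l2"
proof -
  obtain j j' where l1: "l1 = (j, True)" and l2: "l2 = (j', True)"
    using assms(3,4) by (cases l1; cases l2) auto
  have valid: "valid_word d w" and j: "j \<in> {1..d}" and j': "j' \<in> {1..d}"
    using assms(2,4) l1 l2 unfolding minimal_unbalanced_relator_def unbalanced_relator_def by auto
  have second: "letter_perm d l1 y \<in> {j', nxt d j'}" if y: "y \<in> {j, nxt d j}" for y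
  proof -
    have "y \<in> {1..d}" using y j nxt_in_alphabet[of d j] assms(1) by auto
    moreover have "word_section d w y \<noteq> []" using y assms(4) l1 by auto
    then have "\<not> balanced d (word_section d w y)"
      using positive_word_unbalanced valid_word_section[OF assms(1) valid]
        word_section_positive[OF assms(3)] by blast
    ultimately have "length (word_section d (l1 # l2 # r) y) = length (l1 # l2 # r)"
      using minimal_unbalanced_relator_word_section(2)[OF assms(1,2)] assms(4) by blast
    then have "letter_section d l2 (letter_perm d l1 y) \<noteq> []"
      using full_word_section_Cons by blast
    then show ?thesis using letter_section_positive_nonempty l2 by blast
  qed
  have "nxt d j \<noteq> j" "nxt d (nxt d j') \<noteq> j'" using assms(1) j j' nxt_neq nxt_nxt_neq by auto
  then have "letter_perm d l1 j = nxt d j" "letter_perm d l1 (nxt d j) = j" using l1 by auto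
  then have "nxt d j \<in> {j', nxt d j'}" "j \<in> {j', nxt d j'}"
    using second[of j] second[of "nxt d j"] by simp_all
  then show ?thesis
    using l1 l2 nxt_inj[OF j j'] \<open>nxt d (nxt d j') \<noteq> j'\<close> by auto
qed

lemma no_minimal_positive_relator:
  assumes "3 \<le> d" "odd d" "minimal_unbalanced_relator d w" "\<forall>l \<in> set w. snd l"
  shows False
proof -
  have valid: "valid_word d w" and triv: "acts_trivially d w" and "\<not> balanced d w"
    using assms(3) unfolding minimal_unbalanced_relator_def unbalanced_relator_def by auto
  then obtain x where x: "x \<in> {1..d}" "\<not> balanced d (word_section d w x)"
    using unbalanced_word_section assms(1,2) by blast
  define u where "u = word_section d w x"
  have u_min: "minimal_unbalanced_relator d u" and u_full: "length u = length w"
    using minimal_unbalanced_relator_word_section[OF assms(1,3) x] unfolding u_def by auto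
  have "w \<noteq> []" using \<open>\<not> balanced d w\<close> by (auto simp: balanced_def)
  moreover have "w \<noteq> [l]" for l
    using single_letter_not_trivial[OF assms(1), of l] triv valid by (metis valid_word_Cons)
  ultimately obtain l1 l2 r where w: "w = l1 # l2 # r" by (metis list.exhaust)
  have l1: "fst l1 \<in> {1..d}" using valid w by simp
  have full1: "length (word_section d (l1 # l2 # r) x) = length (l1 # l2 # r)"
    using u_full u_def w by simp
  define x1 where "x1 = letter_perm d l1 x"
  have full2: "length (word_section d (l2 # r) x1) = length (l2 # r)"
    using full_word_section_Cons(2)[OF full1] x1_def by simp
  have "x1 \<noteq> x" using letter_perm_moves[OF assms(1) l1 full_word_section_Cons(1)[OF full1]] x1_def by simp
  moreover have "letter_section d l1 x = [(x, True)]" "letter_section d l2 x1 = [(x1, True)]"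
    using letter_section_positive full_word_section_Cons(1)[OF full1] full_word_section_Cons(1)[OF full2]
      assms(4) w by auto
  then have "u = (x, True) # (x1, True) # word_section d r (letter_perm d l2 x1)"
    unfolding u_def using w x1_def by simp
  ultimately show False
    using minimal_positive_relator_first_letters[OF assms(1) u_min] word_section_positive[OF assms(4)]
    unfolding u_def by fastforce
qed

theorem relator_balanced:
  assumes "3 \<le> d" "odd d" "valid_word d w" "acts_trivially d w"
  shows "balanced d w"
proof (rule ccontr)
  assume "\<not> balanced d w"
  then obtain v where min: "minimal_unbalanced_relator d v"
    using minimal_unbalanced_relator_exists assms(3,4) unfolding unbalanced_relator_def by blast
  then have valid: "valid_word d v" and triv: "acts_trivially d v" and "\<not> balanced d v"
    unfolding minimal_unbalanced_relator_def unbalanced_relator_def by auto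
  then obtain x where x: "x \<in> {1..d}" "\<not> balanced d (word_section d v x)"
    using unbalanced_word_section assms(1,2) by blast
  note sec = minimal_unbalanced_relator_word_section[OF assms(1) min x]
  consider "\<forall>l \<in> set v. snd l" | "\<forall>l \<in> set v. \<not> snd l"
    | "\<exists>l \<in> set v. snd l" "\<exists>l \<in> set v. \<not> snd l"
    by blast
  then show False
  proof cases
    case 1
    then show False using no_minimal_positive_relator assms(1,2) min by blast
  next
    case 2
    have "minimal_unbalanced_relator d (word_inv v)"
      using min acts_trivially_word_inv[OF assms(1) valid triv]
      unfolding minimal_unbalanced_relator_def unbalanced_relator_def balanced_def by auto
    moreover have "\<forall>l \<in> set (word_inv v). snd l" using 2 by (auto simp: set_word_inv)
    ultimately show False using no_minimal_positive_relator assms(1,2) by blast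
  next
    case 3
    from list_sign_change[OF this] show False
    proof
      assume "\<exists>a l1 l2 b. v = a @ [l1, l2] @ b \<and> \<not> snd l1 \<and> snd l2"
      then show False
        using full_word_section_cancellation[OF sec(2)]
          minimal_unbalanced_relator_no_cancellation[OF assms(1) sec(1)] by metis
    next
      assume ends: "snd (hd v) \<and> \<not> snd (last v)"
      obtain l v' where v: "v = l # v'" using 3 by (cases v) auto
      with ends have "v' \<noteq> []" by auto
      with v have "v = [hd v] @ butlast v' @ [last v]" by simp
      then show False
        using full_word_section_conjugate[OF sec(2) acts_trivially_word_perm[OF triv x(1)]] ends
          minimal_unbalanced_relator_no_conjugate[OF assms(1) sec(1)] by metis
    qed
  qed
qed

section \<open>The group \<open>G\<^sub>d\<close>\<close>

lemma tree_vertices_eq: "tree_vertices d = lists {1..d}"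
  by (simp add: tree_vertices_def alphabet_def)

lemma tree_autsI:
  assumes "f \<in> extensional (lists {1..d})" "bij_betw f (lists {1..d}) (lists {1..d})"
    "\<And>u. u \<in> lists {1..d} \<Longrightarrow> length (f u) = length u"
    "\<And>u v. u \<in> lists {1..d} \<Longrightarrow> v \<in> lists {1..d} \<Longrightarrow> \<exists>w. f (u @ v) = f u @ w"
  shows "f \<in> tree_auts d"
  using assms unfolding tree_auts_def tree_vertices_eq Bij_def by blast

lemma tree_autsD:
  assumes "f \<in> tree_auts d"
  shows "f \<in> extensional (lists {1..d})" "bij_betw f (lists {1..d}) (lists {1..d})"
    "\<And>u. u \<in> lists {1..d} \<Longrightarrow> length (f u) = length u"
    "\<And>u v. u \<in> lists {1..d} \<Longrightarrow> v \<in> lists {1..d} \<Longrightarrow> \<exists>w. f (u @ v) = f u @ w"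
  using assms unfolding tree_auts_def tree_vertices_eq Bij_def by blast+

lemma tree_auts_funcset: "f \<in> tree_auts d \<Longrightarrow> f \<in> lists {1..d} \<rightarrow> lists {1..d}"
  using tree_autsD(2) bij_betw_imp_funcset by blast

lemma AutT_simps:
  "carrier (AutT d) = tree_auts d"
  "x \<otimes>\<^bsub>AutT d\<^esub> y = compose (lists {1..d}) y x"
  "\<one>\<^bsub>AutT d\<^esub> = (\<lambda>u \<in> lists {1..d}. u)"
  by (simp_all add: AutT_def tree_vertices_eq)

lemma tree_auts_compose:
  assumes f: "f \<in> tree_auts d" and g: "g \<in> tree_auts d"
  shows "compose (lists {1..d}) g f \<in> tree_auts d"
proof (rule tree_autsI)
  have f_maps: "f u \<in> lists {1..d}" if "u \<in> lists {1..d}" for u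
    using tree_auts_funcset[OF f] that by blast
  show "compose (lists {1..d}) g f \<in> extensional (lists {1..d})"
    by (simp add: compose_def)
  show "bij_betw (compose (lists {1..d}) g f) (lists {1..d}) (lists {1..d})"
    using bij_betw_compose[OF tree_autsD(2)[OF f] tree_autsD(2)[OF g]] by (simp add: compose_def)
  show "length (compose (lists {1..d}) g f u) = length u" if "u \<in> lists {1..d}" for u
    using that f_maps[OF that] tree_autsD(3)[OF f] tree_autsD(3)[OF g] by (simp add: compose_eq)
  show "\<exists>w. compose (lists {1..d}) g f (u @ v) = compose (lists {1..d}) g f u @ w"
    if uv: "u \<in> lists {1..d}" "v \<in> lists {1..d}" for u v
  proof -
    obtain w1 where w1: "f (u @ v) = f u @ w1" using tree_autsD(4)[OF f uv] by blast
    have "f u @ w1 \<in> lists {1..d}" using f_maps[of "u @ v"] uv w1 by simp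
    then have "f u \<in> lists {1..d}" "w1 \<in> lists {1..d}" by simp_all
    then obtain w2 where "g (f u @ w1) = g (f u) @ w2" using tree_autsD(4)[OF g] by blast
    then show ?thesis using w1 uv by (simp add: compose_eq)
  qed
qed

lemma monoid_AutT: "monoid (AutT d)"
proof (rule monoidI)
  fix x y assume "x \<in> carrier (AutT d)" "y \<in> carrier (AutT d)"
  then show "x \<otimes>\<^bsub>AutT d\<^esub> y \<in> carrier (AutT d)"
    unfolding AutT_simps by (rule tree_auts_compose)
next
  have "(\<lambda>u \<in> lists {1..d}. u) \<in> tree_auts d"
    by (rule tree_autsI) (auto simp: bij_betw_def inj_on_def)
  then show "\<one>\<^bsub>AutT d\<^esub> \<in> carrier (AutT d)" unfolding AutT_simps .
next
  fix x y z assume "x \<in> carrier (AutT d)" "y \<in> carrier (AutT d)" "z \<in> carrier (AutT d)"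
  then show "x \<otimes>\<^bsub>AutT d\<^esub> y \<otimes>\<^bsub>AutT d\<^esub> z = x \<otimes>\<^bsub>AutT d\<^esub> (y \<otimes>\<^bsub>AutT d\<^esub> z)"
    using tree_auts_funcset by (simp add: AutT_simps compose_assoc)
next
  fix x assume "x \<in> carrier (AutT d)"
  then have "x \<in> lists {1..d} \<rightarrow> lists {1..d}" "x \<in> extensional (lists {1..d})"
    using tree_auts_funcset tree_autsD(1) by (auto simp: AutT_simps)
  then show "\<one>\<^bsub>AutT d\<^esub> \<otimes>\<^bsub>AutT d\<^esub> x = x" "x \<otimes>\<^bsub>AutT d\<^esub> \<one>\<^bsub>AutT d\<^esub> = x"
    by (simp_all add: AutT_simps)
qed

definition word_aut :: "nat \<Rightarrow> letter list \<Rightarrow> nat list \<Rightarrow> nat list" where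
  "word_aut d w = restrict (word_act d w) (tree_vertices d)"

lemma word_aut_in_tree_auts:
  assumes "3 \<le> d" "valid_word d w"
  shows "word_aut d w \<in> tree_auts d"
proof (rule tree_autsI)
  show "bij_betw (word_aut d w) (lists {1..d}) (lists {1..d})"
  proof (rule bij_betw_byWitness[where f' = "word_act d (word_inv w)"])
    show "\<forall>u \<in> lists {1..d}. word_act d (word_inv w) (word_aut d w u) = u"
      using word_act_word_inv assms by (simp add: word_aut_def tree_vertices_eq)
    show "\<forall>u \<in> lists {1..d}. word_aut d w (word_act d (word_inv w) u) = u"
      using word_act_word_inv' word_act_in_lists assms by (simp add: word_aut_def tree_vertices_eq)
    show "word_aut d w ` lists {1..d} \<subseteq> lists {1..d}"
      using word_act_in_lists assms by (auto simp: word_aut_def tree_vertices_eq simp del: in_lists_conv_set)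
    show "word_act d (word_inv w) ` lists {1..d} \<subseteq> lists {1..d}"
      using word_act_in_lists[of d "word_inv w"] assms by (auto simp del: in_lists_conv_set)
  qed
  show "\<exists>x. word_aut d w (u @ v) = word_aut d w u @ x" if "u \<in> lists {1..d}" "v \<in> lists {1..d}" for u v
    using that word_act_append_vertex[of d w u v] by (simp add: word_aut_def tree_vertices_eq)
qed (auto simp: word_aut_def tree_vertices_eq)

lemma word_aut_eqI:
  "(\<And>u. u \<in> lists {1..d} \<Longrightarrow> word_act d w u = f u) \<Longrightarrow> word_aut d w = restrict f (lists {1..d})"
  unfolding word_aut_def tree_vertices_eq by (rule restrict_ext) simp

lemma word_aut_Nil: "word_aut d [] = \<one>\<^bsub>AutT d\<^esub>"
  by (simp add: word_aut_eqI AutT_simps)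

lemma word_aut_gen: "word_aut d [(j, True)] = gen d j"
  unfolding gen_def tree_vertices_eq by (rule word_aut_eqI) simp

lemma word_aut_append:
  assumes "3 \<le> d" "valid_word d a"
  shows "word_aut d (a @ b) = word_aut d a \<otimes>\<^bsub>AutT d\<^esub> word_aut d b"
  unfolding AutT_simps compose_def
  by (rule word_aut_eqI) (use assms word_act_in_lists in \<open>simp add: word_aut_def tree_vertices_eq\<close>)

lemma word_aut_word_inv:
  assumes "3 \<le> d" "valid_word d w"
  shows "word_aut d w \<otimes>\<^bsub>AutT d\<^esub> word_aut d (word_inv w) = \<one>\<^bsub>AutT d\<^esub>"
    and "word_aut d (word_inv w) \<otimes>\<^bsub>AutT d\<^esub> word_aut d w = \<one>\<^bsub>AutT d\<^esub>"
  using word_aut_eqI[of d "w @ word_inv w" "\<lambda>u. u"] word_aut_eqI[of d "word_inv w @ w" "\<lambda>u. u"]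
    word_aut_append[of d w "word_inv w"] word_aut_append[of d "word_inv w" w]
    word_act_word_inv word_act_word_inv' assms
  by (simp_all add: AutT_simps)

lemma inv_AutT_word_aut:
  assumes "3 \<le> d" "valid_word d w"
  shows "inv\<^bsub>AutT d\<^esub> (word_aut d w) = word_aut d (word_inv w)"
  by (rule monoid.inv_unique'[OF monoid_AutT, symmetric])
     (use word_aut_word_inv[OF assms] word_aut_in_tree_auts[OF assms]
        word_aut_in_tree_auts[of d "word_inv w"] assms in \<open>simp_all add: AutT_simps\<close>)

lemma generate_gens_eq_word_auts:
  assumes "3 \<le> d"
  shows "generate (AutT d) (gen d ` {1..d}) = {word_aut d w | w. valid_word d w}"
proof
  show "generate (AutT d) (gen d ` {1..d}) \<subseteq> {word_aut d w | w. valid_word d w}"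
  proof
    fix g assume "g \<in> generate (AutT d) (gen d ` {1..d})"
    then show "g \<in> {word_aut d w | w. valid_word d w}"
    proof induction
      case one
      have "\<one>\<^bsub>AutT d\<^esub> = word_aut d [] \<and> valid_word d []" by (simp add: word_aut_Nil)
      then show ?case by blast
    next
      case (incl h)
      then obtain j where "j \<in> {1..d}" "h = word_aut d [(j, True)]" by (auto simp: word_aut_gen)
      then show ?case by fastforce
    next
      case (inv h)
      then obtain j where "j \<in> {1..d}" "h = word_aut d [(j, True)]" by (auto simp: word_aut_gen)
      then have "inv\<^bsub>AutT d\<^esub> h = word_aut d [(j, False)] \<and> valid_word d [(j, False)]"
        using inv_AutT_word_aut[OF assms, of "[(j, True)]"] by simp
      then show ?case by blast
    next
      case (eng h1 h2)
      then obtain w1 w2 where "h1 = word_aut d w1" "valid_word d w1" "h2 = word_aut d w2" "valid_word d w2"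
        by blast
      then have "h1 \<otimes>\<^bsub>AutT d\<^esub> h2 = word_aut d (w1 @ w2) \<and> valid_word d (w1 @ w2)"
        using word_aut_append[OF assms] by simp
      then show ?case by blast
    qed
  qed
  show "{word_aut d w | w. valid_word d w} \<subseteq> generate (AutT d) (gen d ` {1..d})"
  proof clarify
    fix w assume "valid_word d w"
    then show "word_aut d w \<in> generate (AutT d) (gen d ` {1..d})"
    proof (induction w)
      case Nil
      then show ?case using generate.one word_aut_Nil by metis
    next
      case (Cons l w)
      obtain j b where l: "l = (j, b)" by (cases l)
      have j: "j \<in> {1..d}" using Cons.prems l by simp
      have "word_aut d [l] \<in> generate (AutT d) (gen d ` {1..d})"
      proof (cases b)
        case True
        then show ?thesis using generate.incl[OF imageI[OF j]] l by (simp add: word_aut_gen)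
      next
        case False
        have "inv\<^bsub>AutT d\<^esub> (gen d j) = word_aut d [(j, False)]"
          using inv_AutT_word_aut[OF assms, of "[(j, True)]"] j by (simp add: word_aut_gen)
        then show ?thesis using generate.inv[OF imageI[OF j], of "AutT d" "gen d"] l False by simp
      qed
      moreover have "word_aut d (l # w) = word_aut d [l] \<otimes>\<^bsub>AutT d\<^esub> word_aut d w"
        using word_aut_append[OF assms, of "[l]" w] Cons.prems by simp
      ultimately show ?case using generate.eng Cons by fastforce
    qed
  qed
qed

lemma Gd_simps:
  "carrier (Gd d) = generate (AutT d) (gen d ` {1..d})"
  "x \<otimes>\<^bsub>Gd d\<^esub> y = x \<otimes>\<^bsub>AutT d\<^esub> y"
  "\<one>\<^bsub>Gd d\<^esub> = \<one>\<^bsub>AutT d\<^esub>"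
  by (simp_all add: Gd_def)

lemma carrier_Gd: "3 \<le> d \<Longrightarrow> carrier (Gd d) = {word_aut d w | w. valid_word d w}"
  unfolding Gd_simps by (rule generate_gens_eq_word_auts)

lemma word_aut_in_Gd: "3 \<le> d \<Longrightarrow> valid_word d w \<Longrightarrow> word_aut d w \<in> carrier (Gd d)"
  by (auto simp: carrier_Gd)

lemma Gd_mult_word_aut:
  "3 \<le> d \<Longrightarrow> valid_word d a \<Longrightarrow> word_aut d a \<otimes>\<^bsub>Gd d\<^esub> word_aut d b = word_aut d (a @ b)"
  by (simp add: Gd_simps word_aut_append)

lemma group_Gd:
  assumes "3 \<le> d"
  shows "group (Gd d)"
proof (rule groupI)
  fix x y assume "x \<in> carrier (Gd d)" "y \<in> carrier (Gd d)"
  then show "x \<otimes>\<^bsub>Gd d\<^esub> y \<in> carrier (Gd d)"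
    unfolding Gd_simps by (rule generate.eng)
next
  show "\<one>\<^bsub>Gd d\<^esub> \<in> carrier (Gd d)" unfolding Gd_simps by (rule generate.one)
next
  fix x y z assume "x \<in> carrier (Gd d)" "y \<in> carrier (Gd d)" "z \<in> carrier (Gd d)"
  then show "x \<otimes>\<^bsub>Gd d\<^esub> y \<otimes>\<^bsub>Gd d\<^esub> z = x \<otimes>\<^bsub>Gd d\<^esub> (y \<otimes>\<^bsub>Gd d\<^esub> z)"
    using monoid.m_assoc[OF monoid_AutT] word_aut_in_tree_auts assms
    by (auto simp: carrier_Gd Gd_simps(2) AutT_simps(1))
next
  fix x assume "x \<in> carrier (Gd d)"
  then obtain w where x: "x = word_aut d w" and w: "valid_word d w"
    using assms by (auto simp: carrier_Gd)
  then show "\<one>\<^bsub>Gd d\<^esub> \<otimes>\<^bsub>Gd d\<^esub> x = x"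
    using monoid.l_one[OF monoid_AutT] word_aut_in_tree_auts assms by (simp add: Gd_simps AutT_simps(1))
  have "word_aut d (word_inv w) \<otimes>\<^bsub>Gd d\<^esub> x = \<one>\<^bsub>Gd d\<^esub>"
    using word_aut_word_inv(2)[OF assms w] x by (simp add: Gd_simps)
  then show "\<exists>y \<in> carrier (Gd d). y \<otimes>\<^bsub>Gd d\<^esub> x = \<one>\<^bsub>Gd d\<^esub>"
    using word_aut_in_Gd[OF assms] w by (meson valid_word_inv)
qed

lemma inv_Gd_word_aut:
  assumes "3 \<le> d" "valid_word d w"
  shows "inv\<^bsub>Gd d\<^esub> (word_aut d w) = word_aut d (word_inv w)"
  using group.inv_equality[OF group_Gd[OF assms(1)]] word_aut_word_inv(2)[OF assms]
    word_aut_in_Gd assms by (simp add: Gd_simps)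

section \<open>The abelianization of \<open>G\<^sub>d\<close>\<close>

abbreviation Zd :: "nat \<Rightarrow> (nat \<Rightarrow> int) monoid" where
  "Zd d \<equiv> product_group {1..d} (\<lambda>_. integer_group)"

definition exp_sums :: "nat \<Rightarrow> (nat list \<Rightarrow> nat list) \<Rightarrow> nat \<Rightarrow> int" where
  "exp_sums d g = (\<lambda>k\<in>{1..d}. exp_sum (SOME w. valid_word d w \<and> word_aut d w = g) k)"

lemma exp_sum_eq_if_word_aut_eq:
  assumes "3 \<le> d" "odd d" "valid_word d v" "valid_word d w" "word_aut d v = word_aut d w"
    and "k \<in> {1..d}"
  shows "exp_sum v k = exp_sum w k"
proof -
  have "acts_trivially d (v @ word_inv w)"
    unfolding acts_trivially_def
  proof
    fix u assume u: "u \<in> lists {1..d}"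
    then have "word_act d v u = word_act d w u"
      using fun_cong[OF assms(5), of u] by (simp add: word_aut_def tree_vertices_eq)
    then show "word_act d (v @ word_inv w) u = u" using word_act_word_inv assms(1,4) u by simp
  qed
  then have "balanced d (v @ word_inv w)" using relator_balanced assms(1-4) by simp
  then show ?thesis using assms(6) by (simp add: balanced_def)
qed

lemma exp_sums_word_aut:
  assumes "3 \<le> d" "odd d" "valid_word d w"
  shows "exp_sums d (word_aut d w) = (\<lambda>k\<in>{1..d}. exp_sum w k)"
proof -
  define v where "v = (SOME v. valid_word d v \<and> word_aut d v = word_aut d w)"
  have v: "valid_word d v" "word_aut d v = word_aut d w"
    using someI[of "\<lambda>v. valid_word d v \<and> word_aut d v = word_aut d w" w] assms(3)
    unfolding v_def by auto
  show ?thesis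
    unfolding exp_sums_def v_def[symmetric]
    by (rule restrict_ext) (rule exp_sum_eq_if_word_aut_eq[OF assms(1,2) v(1) assms(3) v(2)])
qed

lemma exp_sums_hom:
  assumes "3 \<le> d" "odd d"
  shows "group_hom (Gd d) (Zd d) (exp_sums d)"
proof -
  have "exp_sums d \<in> hom (Gd d) (Zd d)"
  proof (rule homI)
    fix x y assume "x \<in> carrier (Gd d)" "y \<in> carrier (Gd d)"
    then obtain v w where "valid_word d v" "x = word_aut d v" "valid_word d w" "y = word_aut d w"
      using assms(1) by (auto simp: carrier_Gd)
    then show "exp_sums d (x \<otimes>\<^bsub>Gd d\<^esub> y) = exp_sums d x \<otimes>\<^bsub>Zd d\<^esub> exp_sums d y"
      using assms by (auto simp: Gd_mult_word_aut exp_sums_word_aut intro!: restrict_ext)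
  qed (simp add: exp_sums_def)
  then show ?thesis
    using group_Gd[OF assms(1)] by (simp add: group_hom_def group_hom_axioms_def)
qed

lemma gen_in_Gd: "3 \<le> d \<Longrightarrow> k \<in> {1..d} \<Longrightarrow> gen d k \<in> carrier (Gd d)"
  using word_aut_in_Gd[of d "[(k, True)]"] by (simp add: word_aut_gen)

lemma exp_sums_gen:
  assumes "3 \<le> d" "odd d" "k \<in> {1..d}"
  shows "exp_sums d (gen d k) = (\<lambda>i\<in>{1..d}. if i = k then 1 else 0)"
  using exp_sums_word_aut[OF assms(1,2), of "[(k, True)]"] assms(3)
  by (auto simp: word_aut_gen intro!: restrict_ext)

lemma Gd_hom_ext:
  assumes "3 \<le> d" "group_hom (Gd d) H f" "group_hom (Gd d) H f'"
    and gens: "\<And>k. k \<in> {1..d} \<Longrightarrow> f (gen d k) = f' (gen d k)"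
    and "g \<in> carrier (Gd d)"
  shows "f g = f' g"
proof -
  interpret f: group_hom "Gd d" H f by fact
  interpret f': group_hom "Gd d" H f' by fact
  obtain w where "valid_word d w" "g = word_aut d w" using assms(1,5) by (auto simp: carrier_Gd)
  moreover have "f (word_aut d w) = f' (word_aut d w)" if "valid_word d w" for w
    using that
  proof (induction w)
    case Nil
    have "word_aut d [] = \<one>\<^bsub>Gd d\<^esub>" by (simp add: word_aut_Nil Gd_simps(3))
    then show ?case by (simp only: f.hom_one f'.hom_one)
  next
    case (Cons l w)
    obtain j b where l: "l = (j, b)" by (cases l)
    have j: "j \<in> {1..d}" using Cons.prems l by simp
    have "f (word_aut d [l]) = f' (word_aut d [l])"
    proof (cases b)
      case False
      then have "word_aut d [l] = inv\<^bsub>Gd d\<^esub> (gen d j)"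
        using inv_Gd_word_aut[OF assms(1), of "[(j, True)]"] j l by (simp add: word_aut_gen)
      then show ?thesis using gens[OF j] f.hom_inv f'.hom_inv gen_in_Gd[OF assms(1) j] by metis
    qed (use l word_aut_gen gens[OF j] in metis)
    moreover have "word_aut d (l # w) = word_aut d [l] \<otimes>\<^bsub>Gd d\<^esub> word_aut d w"
      using Gd_mult_word_aut[OF assms(1), of "[l]" w] Cons.prems by simp
    moreover have "word_aut d [l] \<in> carrier (Gd d)" "word_aut d w \<in> carrier (Gd d)"
      using word_aut_in_Gd[OF assms(1)] Cons.prems j l by auto
    moreover have "f (word_aut d w) = f' (word_aut d w)" using Cons by simp
    ultimately show ?case by (simp only: f.hom_mult f'.hom_mult)
  qed
  ultimately show ?thesis by simp
qed

lemma kernel_exp_sums: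
  assumes "3 \<le> d" "odd d"
  shows "kernel (Gd d) (Zd d) (exp_sums d) = Gd_comm d"
proof -
  interpret G: group "Gd d" using group_Gd[OF assms(1)] .
  interpret exp_sums: group_hom "Gd d" "Zd d" "exp_sums d" using exp_sums_hom[OF assms] .
  let ?Q = "Gd d Mod Gd_comm d"
  define A where "A k = Gd_comm d #>\<^bsub>Gd d\<^esub> gen d k" for k
  \<comment> \<open>the inverse of the isomorphism \<open>G_d/G_d' \<rightarrow> \<int>\<^sup>d\<close> to be\<close>
  define \<psi> where "\<psi> e = finprod ?Q (\<lambda>k. A k [^]\<^bsub>?Q\<^esub> (e k :: int)) {1..d}" for e
  have Q: "comm_group ?Q"
    unfolding Gd_comm_def by (rule G.derived_quot_is_comm_group)
  interpret Q: comm_group ?Q by (rule Q)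
  have \<pi>: "group_hom (Gd d) ?Q (\<lambda>g. Gd_comm d #>\<^bsub>Gd d\<^esub> g)"
    using normal.r_coset_hom_Mod[OF G.derived_self_is_normal] G.derived_quot_is_group
    unfolding Gd_comm_def by (simp add: group_hom_def group_hom_axioms_def)
  have A: "A \<in> {1..d} \<rightarrow> carrier ?Q"
    using group_hom.hom_closed[OF \<pi>] gen_in_Gd[OF assms(1)] unfolding A_def by blast
  have \<psi>_hom: "\<psi> \<in> hom (Zd d) ?Q"
    unfolding \<psi>_def using comm_group.finprod_int_pow_hom[OF Q _ A] by simp
  have \<psi>_gen: "\<psi> (exp_sums d (gen d k)) = A k" if k: "k \<in> {1..d}" for k
  proof -
    have "\<psi> (exp_sums d (gen d k)) = finprod ?Q (\<lambda>i. if k = i then A i else \<one>\<^bsub>?Q\<^esub>) {1..d}"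
      unfolding \<psi>_def exp_sums_gen[OF assms k]
      by (rule Q.finprod_cong') (use A Q.one_closed in \<open>auto simp: Pi_iff\<close>)
    then show ?thesis using Q.finprod_singleton[OF k _ A] by simp
  qed
  have factors: "\<psi> (exp_sums d g) = Gd_comm d #>\<^bsub>Gd d\<^esub> g" if "g \<in> carrier (Gd d)" for g
  proof (rule Gd_hom_ext[OF assms(1) _ \<pi> _ that])
    show "group_hom (Gd d) ?Q (\<lambda>g. \<psi> (exp_sums d g))"
      using hom_compose[OF exp_sums.homh \<psi>_hom] G.derived_quot_is_group
      unfolding Gd_comm_def by (simp add: group_hom_def group_hom_axioms_def comp_def)
  qed (simp add: \<psi>_gen A_def)
  have "comm_group (Zd d)" by (rule comm_group_product_group) (rule abelian_integer_group)
  from exp_sums.kernel_eq_derived_if_factors[OF this] show ?thesis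
    using \<psi>_hom factors unfolding Gd_comm_def by blast
qed

lemma gen_pow_in_Gd: "3 \<le> d \<Longrightarrow> k \<in> {1..d} \<Longrightarrow> gen d k [^]\<^bsub>Gd d\<^esub> (n :: int) \<in> carrier (Gd d)"
  by (intro group.int_pow_closed[OF group_Gd] gen_in_Gd)

lemma mono_word_in_Gd:
  assumes "3 \<le> d"
  shows "mono_word d e \<in> carrier (Gd d)"
  unfolding mono_word_def
  by (rule monoid.foldr_mult_closed[OF group.is_monoid[OF group_Gd[OF assms]]])
     (rule gen_pow_in_Gd[OF assms], auto)

lemma exp_sums_mono_word:
  assumes "3 \<le> d" "odd d" "e \<in> carrier (Zd d)"
  shows "exp_sums d (mono_word d e) = e"
proof -
  interpret G: group "Gd d" using group_Gd[OF assms(1)] .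
  interpret exp_sums: group_hom "Gd d" "Zd d" "exp_sums d" using exp_sums_hom[OF assms(1,2)] .
  have gen_pow: "exp_sums d (gen d k [^]\<^bsub>Gd d\<^esub> e k) = (\<lambda>i\<in>{1..d}. if i = k then e k else 0)"
    if k: "k \<in> {1..d}" for k
    using exp_sums.hom_int_pow[OF gen_in_Gd[OF assms(1) k]] exp_sums_gen[OF assms(1,2) k]
      int_pow_product_group[of "{1..d}" "\<lambda>_. integer_group"]
    by (auto intro!: restrict_ext)
  have "exp_sums d (mono_word d e) =
      foldr (\<lambda>k acc. exp_sums d (gen d k [^]\<^bsub>Gd d\<^esub> e k) \<otimes>\<^bsub>Zd d\<^esub> acc) [1..<d+1] \<one>\<^bsub>Zd d\<^esub>"
    unfolding mono_word_def by (rule exp_sums.hom_foldr_mult) (rule gen_pow_in_Gd[OF assms(1)], auto)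
  also have "\<dots> = (\<lambda>i\<in>{1..d}. if i \<in> set [1..<d+1] then e i else 0)"
  proof -
    have "foldr (\<lambda>k acc. exp_sums d (gen d k [^]\<^bsub>Gd d\<^esub> e k) \<otimes>\<^bsub>Zd d\<^esub> acc) [1..<d+1] \<one>\<^bsub>Zd d\<^esub> =
        foldr (\<lambda>k acc. (\<lambda>i\<in>{1..d}. if i = k then e k else 0) \<otimes>\<^bsub>Zd d\<^esub> acc) [1..<d+1] \<one>\<^bsub>Zd d\<^esub>"
      by (rule foldr_cong) (simp_all only: gen_pow set_upt atLeastLessThanSuc_atLeastAtMost Suc_eq_plus1[symmetric])
    then show ?thesis using foldr_unit_vectors[of "[1..<d+1]" "{1..d}" e] by simp
  qed
  also have "\<dots> = e" using assms(3) by (auto simp: PiE_iff intro!: extensionalityI)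
  finally show ?thesis .
qed

lemma Gd_comm_rcos_eq_iff:
  assumes "3 \<le> d" "odd d" "x \<in> carrier (Gd d)" "y \<in> carrier (Gd d)"
  shows "Gd_comm d #>\<^bsub>Gd d\<^esub> x = Gd_comm d #>\<^bsub>Gd d\<^esub> y \<longleftrightarrow> exp_sums d x = exp_sums d y"
  using group_hom.kernel_rcos_eq_iff[OF exp_sums_hom[OF assms(1,2)] assms(3,4)]
  unfolding kernel_exp_sums[OF assms(1,2)] .

lemma exp_sums_surj:
  assumes "3 \<le> d" "odd d"
  shows "exp_sums d ` carrier (Gd d) = carrier (Zd d)"
proof
  show "exp_sums d ` carrier (Gd d) \<subseteq> carrier (Zd d)"
    using group_hom.hom_closed[OF exp_sums_hom[OF assms]] by blast
  show "carrier (Zd d) \<subseteq> exp_sums d ` carrier (Gd d)"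
    using exp_sums_mono_word[OF assms] mono_word_in_Gd[OF assms(1)] by (metis image_eqI subsetI)
qed

lemma Gd_abelianization_iso:
  assumes "3 \<le> d" "odd d"
  shows "(Gd d Mod Gd_comm d) \<cong> Zd d"
  using group_hom.FactGroup_iso[OF exp_sums_hom[OF assms] exp_sums_surj[OF assms]]
  unfolding kernel_exp_sums[OF assms] .

lemma in_rcos_mono_word_exp_sums:
  assumes "3 \<le> d" "odd d" "g \<in> carrier (Gd d)"
  shows "g \<in> Gd_comm d #>\<^bsub>Gd d\<^esub> mono_word d (exp_sums d g)"
proof -
  have "exp_sums d (mono_word d (exp_sums d g)) = exp_sums d g"
    using exp_sums_mono_word[OF assms(1,2)] group_hom.hom_closed[OF exp_sums_hom[OF assms(1,2)] assms(3)]
    by blast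
  then have "Gd_comm d #>\<^bsub>Gd d\<^esub> mono_word d (exp_sums d g) = Gd_comm d #>\<^bsub>Gd d\<^esub> g"
    using Gd_comm_rcos_eq_iff[OF assms(1,2) mono_word_in_Gd[OF assms(1)] assms(3)] by blast
  then show ?thesis
    using group.repr_independenceD[OF group_Gd[OF assms(1)] _ assms(3)]
      group.derived_is_subgroup[OF group_Gd[OF assms(1)]] unfolding Gd_comm_def by blast
qed

theorem theorem4p3:
  fixes d :: nat
  assumes "d \<ge> 3" and "odd d"
  shows "(Gd d Mod Gd_comm d) \<cong> product_group {1..d} (\<lambda>_. integer_group)
    \<and> (\<forall>e \<in> {1..d} \<rightarrow>\<^sub>E (UNIV :: int set). mono_word d e \<in> carrier (Gd d))
    \<and> (\<forall>e \<in> {1..d} \<rightarrow>\<^sub>E (UNIV :: int set). \<forall>e' \<in> {1..d} \<rightarrow>\<^sub>E (UNIV :: int set).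
         Gd_comm d #>\<^bsub>Gd d\<^esub> mono_word d e = Gd_comm d #>\<^bsub>Gd d\<^esub> mono_word d e' \<longrightarrow> e = e')
    \<and> (\<forall>g \<in> carrier (Gd d). \<exists>e \<in> {1..d} \<rightarrow>\<^sub>E (UNIV :: int set).
         g \<in> Gd_comm d #>\<^bsub>Gd d\<^esub> mono_word d e)"
proof (intro conjI ballI impI)
  show "(Gd d Mod Gd_comm d) \<cong> product_group {1..d} (\<lambda>_. integer_group)"
    by (rule Gd_abelianization_iso[OF assms])
  show "mono_word d e \<in> carrier (Gd d)" for e
    by (rule mono_word_in_Gd[OF assms(1)])
  fix e e' :: "nat \<Rightarrow> int"
  assume "e \<in> {1..d} \<rightarrow>\<^sub>E UNIV" "e' \<in> {1..d} \<rightarrow>\<^sub>E UNIV"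
    and "Gd_comm d #>\<^bsub>Gd d\<^esub> mono_word d e = Gd_comm d #>\<^bsub>Gd d\<^esub> mono_word d e'"
  then show "e = e'"
    using Gd_comm_rcos_eq_iff[OF assms mono_word_in_Gd[OF assms(1)] mono_word_in_Gd[OF assms(1)]]
      exp_sums_mono_word[OF assms]
    by simp
next
  fix g assume "g \<in> carrier (Gd d)"
  then show "\<exists>e \<in> {1..d} \<rightarrow>\<^sub>E UNIV. g \<in> Gd_comm d #>\<^bsub>Gd d\<^esub> mono_word d e"
    using in_rcos_mono_word_exp_sums[OF assms] group_hom.hom_closed[OF exp_sums_hom[OF assms]]
    by auto
qed

end
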